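(* Let $\mathcal{D}$ be the arena of a $p$-periodic graph on $V$, $k\ge 1$, and $\mathcal{A}^k$ an augmented $k$-arena of $\mathcal{D}$. Let $t\in\mathbb{Z}_p$, $X=\langle x_1,\dots,x_k\rangle\in[V]^k$, $y\in V$ and $Z=\langle z_1,\dots,z_k\rangle\in[V]^k$ be such that $z_j\in\Gamma_t(x_j,\mathcal{D})$ for all $1\le j\le k$ (i.e., there is a bijection between the elements of the multisets $X$ and $Z$ mapping each element to one of its out-neighbours in $\mathcal{D}$ at slice $t$). If $(t,y)$ is a shadow $k$-corner of $([t+1]_p,Z)$ with respect to $\mathcal{A}^k$, then $\mathcal{A}^k\cup\{(t,X,y)\}$ is an augmented $k$-arena of $\mathcal{D}$.
   Context: Let $V$ be a finite set and $p\ge 1$ an integer; $[t]_p$ denotes $t\bmod p$. A $p$-periodic graph is the sequence of directed graphs $G_t=(V,E_{[t]_p})$ with $E_0,\dots,E_{p-1}\subseteq V\times V$ (self-loops allowed), each sinkless. Its arena $\mathcal{D}$ is the directed graph on $\mathbb{Z}_p\times V$ with $((i,u),([i+1]_p,v))\in E(\mathcal{D})$ iff $(u,v)\in E_i$; $\Gamma_t(u,\mathcal{D})=\{v:((t,u),([t+1]_p,v))\in E(\mathcal{D})\}$. $[V]^k$ denotes the set of multisets of $k$ elements of $V$. Game with $k$ cops: in each round $t$, with cops at $C=\langle c_1,\dots,c_k\rangle$ and robber at $r$, every cop $j$ must move to some $c_j'\in\Gamma_{[t]_p}(c_j,\mathcal{D})$; if some $c_j'=r$ the cops win; otherwise the robber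 must move to some $r'\in\Gamma_{[t]_p}(r,\mathcal{D})$ and the next round starts with cops at $\langle c_1',\dots,c_k'\rangle$ and robber at $r'$. A configuration $(t,C,r)$ ($t\in\mathbb{Z}_p$, $C\in[V]^k$, $r\in V$) is the state at the start of a round with index $\equiv t\pmod p$, cops to move; it is $k$-copwin if from it the cops can force capture in finitely many rounds against every robber strategy. A $k$-hyperedge is a triple $(t,X,y)$ with $t\in\mathbb{Z}_p$, $X\in[V]^k$, $y\in V$. The $k$-arena $\mathcal{D}^k$ is the set of $k$-hyperedges $(t,X,y)$ with $((t,x),([t+1]_p,y))\in E(\mathcal{D})$ for some $x\in X$. An augmented $k$-arena is a set $\mathcal{A}^k\supseteq\mathcal{D}^k$ of $k$-hyperedges such that each $(t,X,y)\in\mathcal{A}^k$ is a $k$-copwin configuration. For a set $\mathcal{A}^k$ of $k$-hyperedges, $\Gamma_t(X,\mathcal{A}^k)=\{y\in V:(t,X,y)\in\mathcal{A}^k\}$. Given $\mathcal{A}^k$, $(t,y)$ is a shadow $k$-corner of $([t+1]_p,Z)$ (and $Z$ a shadow $k$-cover of $(t,y)$), where $Z\in[V]^k$, if $y\notin Z$ and $\Gamma_t(y,\mathcal{D})\subseteq\Gamma_{[t+1]_p}(Z,\mathcal{A}^k)$. *)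

theory Defs
  imports Main "HOL-Library.Multiset"
begin

(* A p-periodic graph on vertex set V: edge sets E 0, ..., E (p-1), slice indices
   are naturals t < p representing Z_p. *)
definition periodic_graph :: "'v set \<Rightarrow> nat \<Rightarrow> (nat \<Rightarrow> ('v \<times> 'v) set) \<Rightarrow> bool" where
  "periodic_graph V p E \<longleftrightarrow> finite V \<and> p \<ge> 1 \<and>
     (\<forall>i<p. E i \<subseteq> V \<times> V \<and> (\<forall>u\<in>V. \<exists>v. (u, v) \<in> E i))"

definition Gam :: "(nat \<Rightarrow> ('v \<times> 'v) set) \<Rightarrow> nat \<Rightarrow> 'v \<Rightarrow> 'v set" where
  "Gam E t u = {v. (u, v) \<in> E t}"

definition cop_move :: "(nat \<Rightarrow> ('v \<times> 'v) set) \<Rightarrow> nat \<Rightarrow> 'v multiset \<Rightarrow> 'v multiset \<Rightarrow> bool" where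
  "cop_move E t C C' \<longleftrightarrow> rel_mset (\<lambda>c c'. c' \<in> Gam E t c) C C'"

(* Positions from which the cops can force capture in finitely many rounds
   (least fixed point / attractor) *)
inductive copwin :: "nat \<Rightarrow> (nat \<Rightarrow> ('v \<times> 'v) set) \<Rightarrow> nat \<Rightarrow> 'v multiset \<Rightarrow> 'v \<Rightarrow> bool"
  for p E where
  step: "cop_move E t C C' \<Longrightarrow>
         (r \<in># C' \<or> (\<forall>r'\<in>Gam E t r. copwin p E ((t + 1) mod p) C' r')) \<Longrightarrow>
         copwin p E t C r"

definition k_copwin :: "'v set \<Rightarrow> nat \<Rightarrow> (nat \<Rightarrow> ('v \<times> 'v) set) \<Rightarrow> nat \<Rightarrow> nat \<Rightarrow> 'v multiset \<Rightarrow> 'v \<Rightarrow> bool" where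
  "k_copwin V p E k t C r \<longleftrightarrow> t < p \<and> size C = k \<and> set_mset C \<subseteq> V \<and> r \<in> V \<and> copwin p E t C r"

definition hyperedge :: "'v set \<Rightarrow> nat \<Rightarrow> nat \<Rightarrow> nat \<times> 'v multiset \<times> 'v \<Rightarrow> bool" where
  "hyperedge V p k h \<longleftrightarrow> (case h of (t, X, y) \<Rightarrow> t < p \<and> size X = k \<and> set_mset X \<subseteq> V \<and> y \<in> V)"

definition k_arena :: "'v set \<Rightarrow> nat \<Rightarrow> (nat \<Rightarrow> ('v \<times> 'v) set) \<Rightarrow> nat \<Rightarrow> (nat \<times> 'v multiset \<times> 'v) set" where
  "k_arena V p E k = {(t, X, y). hyperedge V p k (t, X, y) \<and> (\<exists>x\<in>#X. (x, y) \<in> E t)}"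

definition augmented_k_arena :: "'v set \<Rightarrow> nat \<Rightarrow> (nat \<Rightarrow> ('v \<times> 'v) set) \<Rightarrow> nat \<Rightarrow> (nat \<times> 'v multiset \<times> 'v) set \<Rightarrow> bool" where
  "augmented_k_arena V p E k A \<longleftrightarrow>
     k_arena V p E k \<subseteq> A \<and> (\<forall>h\<in>A. hyperedge V p k h) \<and>
     (\<forall>(t, X, y)\<in>A. k_copwin V p E k t X y)"

definition GamA :: "(nat \<times> 'v multiset \<times> 'v) set \<Rightarrow> nat \<Rightarrow> 'v multiset \<Rightarrow> 'v set" where
  "GamA A t X = {y. (t, X, y) \<in> A}"

definition shadow_corner :: "nat \<Rightarrow> (nat \<Rightarrow> ('v \<times> 'v) set) \<Rightarrow> (nat \<times> 'v multiset \<times> 'v) set \<Rightarrow> nat \<Rightarrow> 'v \<Rightarrow> 'v multiset \<Rightarrow> bool" where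
  "shadow_corner p E A t y Z \<longleftrightarrow> y \<notin># Z \<and> Gam E t y \<subseteq> GamA A ((t + 1) mod p) Z"

end

theory Submission
  imports Defs
begin

(* If the cops move from X onto a shadow cover Z of (t, y), then every robber move from y
   leads to a hyperedge of the augmented arena, which is copwin by assumption; hence
   (t, X, y) is copwin after one round and may be added to the augmented arena. *)

lemma augmented_k_arena_copwin:
  assumes "augmented_k_arena V p E k A" and "(t, X, y) \<in> A"
  shows "copwin p E t X y"
  using assms unfolding augmented_k_arena_def k_copwin_def by fastforce

lemma augmented_k_arena_insert:
  assumes "augmented_k_arena V p E k A" and "k_copwin V p E k t X y"
  shows "augmented_k_arena V p E k (A \<union> {(t, X, y)})"
proof -
  have "hyperedge V p k (t, X, y)"
    using assms(2) unfolding k_copwin_def hyperedge_def by auto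
  with assms show ?thesis
    unfolding augmented_k_arena_def by auto
qed

lemma copwin_move_to_shadow_cover:
  assumes "augmented_k_arena V p E k A"
    and "cop_move E t X Z"
    and "Gam E t y \<subseteq> GamA A ((t + 1) mod p) Z"
  shows "copwin p E t X y"
proof (rule copwin.step[OF assms(2)])
  have "copwin p E ((t + 1) mod p) Z r'" if "r' \<in> Gam E t y" for r'
    using that assms(3) augmented_k_arena_copwin[OF assms(1)] unfolding GamA_def by blast
  then show "y \<in># Z \<or> (\<forall>r'\<in>Gam E t y. copwin p E ((t + 1) mod p) Z r')"
    by blast
qed

theorem theorem7:
  fixes V :: "'v set" and p k t :: nat and E :: "nat \<Rightarrow> ('v \<times> 'v) set"
    and A :: "(nat \<times> 'v multiset \<times> 'v) set" and X Z :: "'v multiset" and y :: 'v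
  assumes "periodic_graph V p E"
    and "k \<ge> 1"
    and "augmented_k_arena V p E k A"
    and "t < p"
    and "size X = k" and "set_mset X \<subseteq> V"
    and "y \<in> V"
    and "size Z = k" and "set_mset Z \<subseteq> V"
    and "cop_move E t X Z"
    and "shadow_corner p E A t y Z"
  shows "augmented_k_arena V p E k (A \<union> {(t, X, y)})"
proof -
  have "copwin p E t X y"
    using copwin_move_to_shadow_cover[OF assms(3,10)] assms(11)
    unfolding shadow_corner_def by blast
  with assms(4-7) have "k_copwin V p E k t X y"
    unfolding k_copwin_def by blast
  with assms(3) show ?thesis
    by (rule augmented_k_arena_insert)
qed

end
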